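(* Let $s=\tfrac12$, $\lambda\in\mathbb{C}$ and $k\in\mathbb{Z}\setminus\{0\}$. Every even superderivation of $\mathfrak{L}^{1/2}_\lambda$ of degree $k$ is inner; more precisely, it equals $\mathrm{ad}(aL_k+bI_k)$ for some $a,b\in\mathbb{C}$.
   Context: For $s\in\{0,\tfrac12\}$ and $\lambda\in\mathbb{C}$, $\mathfrak{L}^s_\lambda$ is the complex Lie superalgebra with basis $\{L_m,I_m,G_p,H_p : m\in\mathbb{Z},\ p\in s+\mathbb{Z}\}$, even part spanned by the $L_m,I_m$, odd part spanned by the $G_p,H_p$, and brackets $[L_m,L_n]=(m-n)L_{m+n}$, $[L_m,I_n]=(m-n)I_{m+n}$, $[L_m,H_p]=(\tfrac m2-p)H_{m+p}$, $[L_m,G_p]=(\tfrac m2-p)G_{m+p}+\lambda(m+1)H_{m+p}$, $[I_m,G_p]=(m-2p)H_{m+p}$, $[G_p,G_q]=I_{p+q}$, plus those given by super-antisymmetry $[y,x]=-(-1)^{|x||y|}[x,y]$; all other brackets of basis elements are zero. $\mathfrak{L}_r$ ($r\in\tfrac12\mathbb{Z}$) is spanned by basis elements of index $r$. A superderivation of parity $a$ is a linear map $D$ shifting parity by $a$ with $D([x,y])=[D(x),y]+(-1)^{a|x|}[x,D(y)]$ for homogeneous $x,y$; it has degree $r$ if $D(\mathfrak{L}_q)\subset\mathfrak{L}_{q+r}$. $\mathrm{ad}\,x(y)=[x,y]$. *)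

theory Defs
  imports Complex_Main
begin

text \<open>The Lie superalgebra L^{1/2}_lambda.  Basis elements: L m, I m (m integer),
  and G j, H j standing for G_{j+1/2}, H_{j+1/2} (j integer), since s = 1/2.\<close>

datatype basis = L int | I int | G int | H int

type_synonym elt = "basis \<Rightarrow> complex"

definition supp :: "elt \<Rightarrow> basis set" where
  "supp x = {b. x b \<noteq> 0}"

definition Alg :: "elt set" where
  "Alg = {x. finite (supp x)}"

definition sgl :: "basis \<Rightarrow> elt" where
  "sgl b = (\<lambda>c. if c = b then 1 else 0)"

definition halfp :: "int \<Rightarrow> complex" where
  "halfp j = of_int j + 1/2"

fun br :: "complex \<Rightarrow> basis \<Rightarrow> basis \<Rightarrow> elt" where
  "br lam (L m) (L n) = (\<lambda>c. of_int (m - n) * sgl (L (m + n)) c)"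
| "br lam (L m) (I n) = (\<lambda>c. of_int (m - n) * sgl (I (m + n)) c)"
| "br lam (I n) (L m) = (\<lambda>c. - (of_int (m - n) * sgl (I (m + n)) c))"
| "br lam (L m) (H j) = (\<lambda>c. (of_int m / 2 - halfp j) * sgl (H (m + j)) c)"
| "br lam (H j) (L m) = (\<lambda>c. - ((of_int m / 2 - halfp j) * sgl (H (m + j)) c))"
| "br lam (L m) (G j) = (\<lambda>c. (of_int m / 2 - halfp j) * sgl (G (m + j)) c
                              + lam * (of_int m + 1) * sgl (H (m + j)) c)"
| "br lam (G j) (L m) = (\<lambda>c. - ((of_int m / 2 - halfp j) * sgl (G (m + j)) c
                              + lam * (of_int m + 1) * sgl (H (m + j)) c))"
| "br lam (I m) (G j) = (\<lambda>c. (of_int m - 2 * halfp j) * sgl (H (m + j)) c)"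
| "br lam (G j) (I m) = (\<lambda>c. - ((of_int m - 2 * halfp j) * sgl (H (m + j)) c))"
| "br lam (G j1) (G j2) = sgl (I (j1 + j2 + 1))"
| "br lam x y = (\<lambda>c. 0)"

definition bracket :: "complex \<Rightarrow> elt \<Rightarrow> elt \<Rightarrow> elt" where
  "bracket lam x y = (\<lambda>c. \<Sum>b1\<in>supp x. \<Sum>b2\<in>supp y. x b1 * y b2 * br lam b1 b2 c)"

fun is_even :: "basis \<Rightarrow> bool" where
  "is_even (L m) = True" | "is_even (I m) = True"
| "is_even (G j) = False" | "is_even (H j) = False"

definition EvenPart :: "elt set" where
  "EvenPart = {x \<in> Alg. \<forall>b. x b \<noteq> 0 \<longrightarrow> is_even b}"

definition OddPart :: "elt set" where
  "OddPart = {x \<in> Alg. \<forall>b. x b \<noteq> 0 \<longrightarrow> \<not> is_even b}"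

definition homogeneous :: "elt \<Rightarrow> bool" where
  "homogeneous x \<longleftrightarrow> x \<in> EvenPart \<or> x \<in> OddPart"

fun idx :: "basis \<Rightarrow> real" where
  "idx (L m) = of_int m" | "idx (I m) = of_int m"
| "idx (G j) = of_int j + 1/2" | "idx (H j) = of_int j + 1/2"

definition Grade :: "real \<Rightarrow> elt set" where
  "Grade r = {x \<in> Alg. \<forall>b. x b \<noteq> 0 \<longrightarrow> idx b = r}"

definition linear_on_Alg :: "(elt \<Rightarrow> elt) \<Rightarrow> bool" where
  "linear_on_Alg D \<longleftrightarrow> (\<forall>x\<in>Alg. D x \<in> Alg)
     \<and> (\<forall>x\<in>Alg. \<forall>y\<in>Alg. D (\<lambda>b. x b + y b) = (\<lambda>b. D x b + D y b))
     \<and> (\<forall>x\<in>Alg. \<forall>c::complex. D (\<lambda>b. c * x b) = (\<lambda>b. c * D x b))"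

text \<open>Even superderivation: linear, parity preserving, and D[x,y] = [Dx,y] + [x,Dy]
  for homogeneous x, y (the sign (-1)^{0*|x|} is 1).\<close>
definition even_superderivation :: "complex \<Rightarrow> (elt \<Rightarrow> elt) \<Rightarrow> bool" where
  "even_superderivation lam D \<longleftrightarrow> linear_on_Alg D
     \<and> (\<forall>x\<in>EvenPart. D x \<in> EvenPart) \<and> (\<forall>x\<in>OddPart. D x \<in> OddPart)
     \<and> (\<forall>x y. homogeneous x \<longrightarrow> homogeneous y \<longrightarrow>
          D (bracket lam x y) = (\<lambda>c. bracket lam (D x) y c + bracket lam x (D y) c))"

definition has_degree :: "(elt \<Rightarrow> elt) \<Rightarrow> real \<Rightarrow> bool" where
  "has_degree D r \<longleftrightarrow> (\<forall>q. \<forall>x\<in>Grade q. D x \<in> Grade (q + r))"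

end

theory Submission
  imports Defs
begin

text \<open>Bracketing with L_0 multiplies each basis element by minus its index, up to the term
  lam H_p in [L_0, G_p]. Applying an even superderivation D of degree k to [L_0, x] therefore
  gives k D x = [D L_0, x] for x = L_m, I_m; for x = H_p, G_p a correction term appears, which
  vanishes on comparing G-coefficients. Hence D agrees with ad (D L_0 / k) on the basis, and so
  everywhere by linearity.\<close>

lemma supp_sgl [simp]: "supp (sgl e) = {e}"
  by (auto simp: supp_def sgl_def)

lemma sgl_same [simp]: "sgl e e = 1"
  by (simp add: sgl_def)

lemma sgl_in_Alg [simp]: "sgl e \<in> Alg"
  by (simp add: Alg_def)

lemma homogeneous_sgl: "homogeneous (sgl e)"
  using sgl_in_Alg[of e] by (cases e) (auto simp: homogeneous_def EvenPart_def OddPart_def sgl_def)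

lemma sgl_in_Grade: "sgl e \<in> Grade (idx e)"
  using sgl_in_Alg[of e] by (auto simp: Grade_def sgl_def split: if_splits)

lemma scaled_sgl_in_Alg: "(\<lambda>c. t * sgl e c) \<in> Alg"
proof -
  have "supp (\<lambda>c. t * sgl e c) \<subseteq> {e}" by (auto simp: supp_def sgl_def)
  then show ?thesis by (simp add: Alg_def finite_subset)
qed

lemma supp_pair_subset: "supp (\<lambda>c. p * sgl e1 c + q * sgl e2 c) \<subseteq> {e1, e2}"
  by (auto simp: supp_def sgl_def)

lemma Alg_eq_sum_sgl: "x \<in> Alg \<Longrightarrow> x = (\<lambda>c. \<Sum>e\<in>supp x. x e * sgl e c)"
proof
  fix c assume "x \<in> Alg"
  then have "finite (supp x)" by (simp add: Alg_def)
  moreover have "(\<Sum>e\<in>supp x. x e * sgl e c) = (\<Sum>e\<in>supp x. if e = c then x e else 0)"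
    by (rule sum.cong) (auto simp: sgl_def)
  ultimately show "x c = (\<Sum>e\<in>supp x. x e * sgl e c)" by (simp add: supp_def)
qed

lemma sum_sgl_in_Alg: "finite S \<Longrightarrow> (\<lambda>c. \<Sum>e\<in>S. f e * sgl e c) \<in> Alg"
proof -
  assume S: "finite S"
  have "supp (\<lambda>c. \<Sum>e\<in>S. f e * sgl e c) \<subseteq> S"
  proof
    fix c assume "c \<in> supp (\<lambda>c. \<Sum>e\<in>S. f e * sgl e c)"
    then obtain e where "e \<in> S" "f e * sgl e c \<noteq> 0"
      using sum.neutral[of S "\<lambda>e. f e * sgl e c"] by (auto simp: supp_def)
    then show "c \<in> S" by (auto simp: sgl_def split: if_splits)
  qed
  with S show ?thesis by (simp add: Alg_def finite_subset)
qed

lemma EvenPart_Grade_eq_pair: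
  assumes "x \<in> EvenPart" "x \<in> Grade (of_int n)"
  shows "x = (\<lambda>c. x (L n) * sgl (L n) c + x (I n) * sgl (I n) c)"
proof
  fix c show "x c = x (L n) * sgl (L n) c + x (I n) * sgl (I n) c"
  proof (cases "x c = 0")
    case False
    then have "is_even c" "idx c = of_int n" using assms by (auto simp: EvenPart_def Grade_def)
    then show ?thesis by (cases c) (auto simp: sgl_def)
  qed (cases c; auto simp: sgl_def)
qed

lemma OddPart_Grade_eq_pair:
  assumes "x \<in> OddPart" "x \<in> Grade (of_int n + 1/2)"
  shows "x = (\<lambda>c. x (G n) * sgl (G n) c + x (H n) * sgl (H n) c)"
proof
  fix c show "x c = x (G n) * sgl (G n) c + x (H n) * sgl (H n) c"
  proof (cases "x c = 0")
    case False
    then have "\<not> is_even c" "idx c = of_int n + 1/2" using assms by (auto simp: OddPart_def Grade_def)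
    then show ?thesis by (cases c) (auto simp: sgl_def)
  qed (cases c; auto simp: sgl_def)
qed

lemma bracket_eq_sum_superset:
  assumes "finite A" "finite B" "supp x \<subseteq> A" "supp y \<subseteq> B"
  shows "bracket lam x y c = (\<Sum>e1\<in>A. \<Sum>e2\<in>B. x e1 * y e2 * br lam e1 e2 c)"
proof -
  have "finite (supp x)" "finite (supp y)" using assms finite_subset by blast+
  then have "bracket lam x y c = (\<Sum>e1\<in>supp x. \<Sum>e2\<in>B. x e1 * y e2 * br lam e1 e2 c)"
    unfolding bracket_def using assms
    by (intro sum.cong refl sum.mono_neutral_left) (auto simp: supp_def)
  also have "\<dots> = (\<Sum>e1\<in>A. \<Sum>e2\<in>B. x e1 * y e2 * br lam e1 e2 c)"
    by (rule sum.mono_neutral_left) (use assms \<open>finite (supp x)\<close> in \<open>auto simp: supp_def\<close>)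
  finally show ?thesis .
qed

lemma bracket_sgl_sgl: "bracket lam (sgl e1) (sgl e2) = br lam e1 e2"
  by (rule ext, subst bracket_eq_sum_superset[of "{e1}" "{e2}"]) simp_all

lemma bracket_pair_sgl:
  "e1 \<noteq> e2 \<Longrightarrow> bracket lam (\<lambda>c. p * sgl e1 c + q * sgl e2 c) (sgl e3) x
     = p * br lam e1 e3 x + q * br lam e2 e3 x"
  by (subst bracket_eq_sum_superset[OF _ _ supp_pair_subset, where B="{e3}"]) (auto simp: sgl_def supp_def)

lemma bracket_sgl_pair:
  "e1 \<noteq> e2 \<Longrightarrow> bracket lam (sgl e3) (\<lambda>c. p * sgl e1 c + q * sgl e2 c) x
     = p * br lam e3 e1 x + q * br lam e3 e2 x"
  by (subst bracket_eq_sum_superset[OF _ _ _ supp_pair_subset, where A="{e3}"]) (auto simp: sgl_def supp_def)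

lemma bracket_eq_sum_right:
  assumes "finite A" "supp X \<subseteq> A" "x \<in> Alg"
  shows "bracket lam X x c = (\<Sum>e\<in>supp x. x e * bracket lam X (sgl e) c)"
proof -
  have "finite (supp x)" using assms by (simp add: Alg_def)
  then have "bracket lam X x c = (\<Sum>e1\<in>A. \<Sum>e2\<in>supp x. X e1 * x e2 * br lam e1 e2 c)"
    using assms by (intro bracket_eq_sum_superset) auto
  moreover have "\<And>e. bracket lam X (sgl e) c = (\<Sum>e1\<in>A. X e1 * br lam e1 e c)"
    by (subst bracket_eq_sum_superset[OF assms(1) _ assms(2), where B="{e}"]) (auto simp: sgl_def supp_def)
  ultimately show ?thesis
    by (simp add: sum_distrib_left ac_simps) (rule sum.swap)
qed

lemma linear_on_Alg_sum_sgl: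
  assumes lin: "linear_on_Alg D" and "finite S"
  shows "D (\<lambda>c. \<Sum>e\<in>S. f e * sgl e c) = (\<lambda>c. \<Sum>e\<in>S. f e * D (sgl e) c)"
proof -
  have add: "\<And>x y. x \<in> Alg \<Longrightarrow> y \<in> Alg \<Longrightarrow> D (\<lambda>e. x e + y e) = (\<lambda>e. D x e + D y e)"
   and scale: "\<And>x t. x \<in> Alg \<Longrightarrow> D (\<lambda>e. t * x e) = (\<lambda>e. t * D x e)"
    using lin by (simp_all add: linear_on_Alg_def)
  show ?thesis
    using \<open>finite S\<close>
  proof (induction S rule: finite_induct)
    case empty
    show ?case using scale[of "\<lambda>c. 0" 0] by (simp add: Alg_def supp_def)
  next
    case (insert s S)
    have "D (\<lambda>c. \<Sum>e\<in>insert s S. f e * sgl e c) = D (\<lambda>c. f s * sgl s c + (\<Sum>e\<in>S. f e * sgl e c))"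
      using insert by simp
    also have "\<dots> = (\<lambda>c. D (\<lambda>c. f s * sgl s c) c + D (\<lambda>c. \<Sum>e\<in>S. f e * sgl e c) c)"
      by (rule add[OF scaled_sgl_in_Alg sum_sgl_in_Alg[OF insert(1)]])
    also have "\<dots> = (\<lambda>c. \<Sum>e\<in>insert s S. f e * D (sgl e) c)"
      using insert by (simp add: scale[OF sgl_in_Alg])
    finally show ?case .
  qed
qed

lemma linear_on_Alg_eq_bracket:
  assumes "linear_on_Alg D" "finite (supp X)" "\<And>e. D (sgl e) = bracket lam X (sgl e)" "x \<in> Alg"
  shows "D x = bracket lam X x"
proof -
  have "finite (supp x)" using \<open>x \<in> Alg\<close> by (simp add: Alg_def)
  have "D x = D (\<lambda>c. \<Sum>e\<in>supp x. x e * sgl e c)" using Alg_eq_sum_sgl[OF \<open>x \<in> Alg\<close>] by simp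
  also have "\<dots> = (\<lambda>c. \<Sum>e\<in>supp x. x e * D (sgl e) c)"
    by (rule linear_on_Alg_sum_sgl) fact+
  also have "\<dots> = bracket lam X x"
    using assms by (intro ext, subst bracket_eq_sum_right[of "supp X"]) simp_all
  finally show ?thesis .
qed

lemma bracket_L0_even_pair:
  assumes "y = (\<lambda>c. y (L n) * sgl (L n) c + y (I n) * sgl (I n) c)"
  shows "bracket lam (sgl (L 0)) y = (\<lambda>c. - of_int n * y c)"
proof -
  obtain u v where y: "y = (\<lambda>c. u * sgl (L n) c + v * sgl (I n) c)" using assms by blast
  show ?thesis unfolding y by (rule ext) (simp add: bracket_sgl_pair algebra_simps)
qed

lemma bracket_L0_odd_pair:
  assumes "y = (\<lambda>c. y (G n) * sgl (G n) c + y (H n) * sgl (H n) c)"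
  shows "bracket lam (sgl (L 0)) y = (\<lambda>c. - halfp n * y c + lam * y (G n) * sgl (H n) c)"
proof -
  obtain u v where y: "y = (\<lambda>c. u * sgl (G n) c + v * sgl (H n) c)" using assms by blast
  show ?thesis unfolding y
    by (rule ext) (simp add: bracket_sgl_pair algebra_simps, simp add: sgl_def algebra_simps)
qed

locale degree_k_even_superderivation =
  fixes lam :: complex and k :: int and D :: "elt \<Rightarrow> elt"
  assumes k_nonzero: "k \<noteq> 0"
    and superderivation: "even_superderivation lam D"
    and degree: "has_degree D (of_int k)"
begin

lemma linear: "linear_on_Alg D"
  using superderivation by (simp add: even_superderivation_def)

lemma D_scale: "x \<in> Alg \<Longrightarrow> D (\<lambda>e. c * x e) = (\<lambda>e. c * D x e)"
  using linear by (simp add: linear_on_Alg_def)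

lemma D_add: "x \<in> Alg \<Longrightarrow> y \<in> Alg \<Longrightarrow> D (\<lambda>e. x e + y e) = (\<lambda>e. D x e + D y e)"
  using linear by (simp add: linear_on_Alg_def)

lemma D_bracket:
  "homogeneous x \<Longrightarrow> homogeneous y \<Longrightarrow>
     D (bracket lam x y) = (\<lambda>c. bracket lam (D x) y c + bracket lam x (D y) c)"
  using superderivation by (simp add: even_superderivation_def)

lemma k_nonzero_complex: "(of_int k :: complex) \<noteq> 0"
  using k_nonzero by simp

lemma D_sgl_even:
  assumes "e = L m \<or> e = I m"
  shows "D (sgl e) = (\<lambda>c. D (sgl e) (L (m+k)) * sgl (L (m+k)) c + D (sgl e) (I (m+k)) * sgl (I (m+k)) c)"
proof (rule EvenPart_Grade_eq_pair)
  have "sgl e \<in> EvenPart" using assms sgl_in_Alg[of e] by (auto simp: EvenPart_def sgl_def)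
  then show "D (sgl e) \<in> EvenPart" using superderivation by (simp add: even_superderivation_def)
  show "D (sgl e) \<in> Grade (of_int (m + k))"
    using degree sgl_in_Grade[of e] assms unfolding has_degree_def by force
qed

lemma D_sgl_odd:
  assumes "e = G j \<or> e = H j"
  shows "D (sgl e) = (\<lambda>c. D (sgl e) (G (j+k)) * sgl (G (j+k)) c + D (sgl e) (H (j+k)) * sgl (H (j+k)) c)"
proof (rule OddPart_Grade_eq_pair)
  have "sgl e \<in> OddPart" using assms sgl_in_Alg[of e] by (auto simp: OddPart_def sgl_def)
  then show "D (sgl e) \<in> OddPart" using superderivation by (simp add: even_superderivation_def)
  have "D (sgl e) \<in> Grade (idx e + of_int k)"
    using degree sgl_in_Grade[of e] unfolding has_degree_def by blast
  then show "D (sgl e) \<in> Grade (of_int (j + k) + 1/2)"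
    using assms by (auto simp: algebra_simps)
qed

definition coefL :: complex where "coefL = D (sgl (L 0)) (L k) / of_int k"
definition coefI :: complex where "coefI = D (sgl (L 0)) (I k) / of_int k"

definition X :: elt where "X = (\<lambda>c. coefL * sgl (L k) c + coefI * sgl (I k) c)"

lemma bracket_X_sgl: "bracket lam X (sgl e) c = coefL * br lam (L k) e c + coefI * br lam (I k) e c"
  unfolding X_def by (simp add: bracket_pair_sgl)

lemma D_br_L0:
  "D (br lam (L 0) e) c = of_int k * bracket lam X (sgl e) c + bracket lam (sgl (L 0)) (D (sgl e)) c"
proof -
  have D_L0: "D (sgl (L 0)) = (\<lambda>c. D (sgl (L 0)) (L k) * sgl (L k) c + D (sgl (L 0)) (I k) * sgl (I k) c)"
    by (rule D_sgl_even[of "L 0" 0, unfolded add_0_left]) simp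
  have "bracket lam (D (sgl (L 0))) (sgl e) c
      = bracket lam (\<lambda>c. D (sgl (L 0)) (L k) * sgl (L k) c + D (sgl (L 0)) (I k) * sgl (I k) c) (sgl e) c"
    by (rule arg_cong[where f="\<lambda>y. bracket lam y (sgl e) c", OF D_L0])
  also have "\<dots> = D (sgl (L 0)) (L k) * br lam (L k) e c + D (sgl (L 0)) (I k) * br lam (I k) e c"
    by (rule bracket_pair_sgl) simp
  also have "\<dots> = of_int k * bracket lam X (sgl e) c"
    using k_nonzero_complex by (simp add: bracket_X_sgl coefL_def coefI_def algebra_simps)
  finally show ?thesis
    using D_bracket[OF homogeneous_sgl homogeneous_sgl, of "L 0" e] by (simp add: bracket_sgl_sgl)
qed

lemma D_sgl_even_eq_bracket:
  assumes "e = L m \<or> e = I m"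
  shows "D (sgl e) = bracket lam X (sgl e)"
proof
  fix c
  have "D (br lam (L 0) e) = D (\<lambda>c. (- of_int m) * sgl e c)"
    using assms by (intro arg_cong[where f=D] ext) auto
  also have "\<dots> = (\<lambda>c. (- of_int m) * D (sgl e) c)"
    by (rule D_scale) simp
  finally have "D (br lam (L 0) e) = (\<lambda>c. (- of_int m) * D (sgl e) c)" .
  moreover have "bracket lam (sgl (L 0)) (D (sgl e)) = (\<lambda>c. - of_int (m + k) * D (sgl e) c)"
    by (rule bracket_L0_even_pair[OF D_sgl_even[OF assms]])
  ultimately have "of_int k * D (sgl e) c = of_int k * bracket lam X (sgl e) c"
    using D_br_L0[of e c] by (simp add: algebra_simps)
  then show "D (sgl e) c = bracket lam X (sgl e) c"
    using k_nonzero_complex by simp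
qed

text \<open>Here [L_0, D H_j] carries the extra term lam u H_{j+k}; its coefficient u is the
  G-component of D H_j, which the identity forces to be 0.\<close>
lemma D_sgl_H_eq_bracket: "D (sgl (H j)) = bracket lam X (sgl (H j))"
proof
  fix c
  define u where "u = D (sgl (H j)) (G (j + k))"
  have "D (br lam (L 0) (H j)) = D (\<lambda>c. (- halfp j) * sgl (H j) c)"
    by (intro arg_cong[where f=D] ext) simp
  also have "\<dots> = (\<lambda>c. (- halfp j) * D (sgl (H j)) c)"
    by (rule D_scale) simp
  finally have "D (br lam (L 0) (H j)) = (\<lambda>c. (- halfp j) * D (sgl (H j)) c)" .
  moreover have "bracket lam (sgl (L 0)) (D (sgl (H j)))
      = (\<lambda>c. - halfp (j + k) * D (sgl (H j)) c + lam * u * sgl (H (j + k)) c)"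
    unfolding u_def by (rule bracket_L0_odd_pair[OF D_sgl_odd]) simp
  ultimately have eq: "of_int k * D (sgl (H j)) c' = of_int k * bracket lam X (sgl (H j)) c'
      + lam * u * sgl (H (j + k)) c'" for c'
    using D_br_L0[of "H j" c'] by (simp add: halfp_def algebra_simps)
  have "of_int k * u = 0"
    using eq[of "G (j + k)"] unfolding bracket_X_sgl u_def by (simp add: sgl_def)
  then show "D (sgl (H j)) c = bracket lam X (sgl (H j)) c"
    using eq[of c] k_nonzero_complex by simp
qed

text \<open>Now the correction term is lam (u H_{j+k} - [X, H_j]); comparing G-coefficients gives
  u = coefL (k/2 - p), and [X, H_j] = coefL (k/2 - p) H_{j+k}.\<close>
lemma D_sgl_G_eq_bracket: "D (sgl (G j)) = bracket lam X (sgl (G j))"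
proof
  fix c
  define u where "u = D (sgl (G j)) (G (j + k))"
  have "D (br lam (L 0) (G j)) = D (\<lambda>c. (- halfp j) * sgl (G j) c + lam * sgl (H j) c)"
    by (intro arg_cong[where f=D] ext) simp
  also have "\<dots> = (\<lambda>c. (- halfp j) * D (sgl (G j)) c + lam * bracket lam X (sgl (H j)) c)"
    by (simp only: D_add[OF scaled_sgl_in_Alg scaled_sgl_in_Alg] D_scale[OF sgl_in_Alg]
        D_sgl_H_eq_bracket)
  finally have "D (br lam (L 0) (G j))
      = (\<lambda>c. (- halfp j) * D (sgl (G j)) c + lam * bracket lam X (sgl (H j)) c)" .
  moreover have "bracket lam (sgl (L 0)) (D (sgl (G j)))
      = (\<lambda>c. - halfp (j + k) * D (sgl (G j)) c + lam * u * sgl (H (j + k)) c)"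
    unfolding u_def by (rule bracket_L0_odd_pair[OF D_sgl_odd]) simp
  ultimately have eq: "of_int k * D (sgl (G j)) c' = of_int k * bracket lam X (sgl (G j)) c'
      + lam * (u * sgl (H (j + k)) c' - bracket lam X (sgl (H j)) c')" for c'
    using D_br_L0[of "G j" c'] by (simp add: halfp_def algebra_simps)
  have "of_int k * u = of_int k * (coefL * (of_int k / 2 - halfp j))"
    using eq[of "G (j + k)"] unfolding bracket_X_sgl u_def by (simp add: sgl_def)
  then have "u * sgl (H (j + k)) c' = bracket lam X (sgl (H j)) c'" for c'
    using k_nonzero_complex unfolding bracket_X_sgl by (auto simp: sgl_def)
  then show "D (sgl (G j)) c = bracket lam X (sgl (G j)) c"
    using eq[of c] k_nonzero_complex by simp
qed

lemma D_sgl_eq_bracket: "D (sgl e) = bracket lam X (sgl e)"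
  by (cases e) (simp_all add: D_sgl_even_eq_bracket D_sgl_G_eq_bracket D_sgl_H_eq_bracket)

lemma finite_supp_X: "finite (supp X)"
  unfolding X_def using supp_pair_subset by (rule finite_subset) simp

lemma D_eq_bracket_X: "x \<in> Alg \<Longrightarrow> D x = bracket lam X x"
  by (rule linear_on_Alg_eq_bracket[OF linear finite_supp_X D_sgl_eq_bracket])

end

theorem lemma2p6:
  fixes lam :: complex and k :: int and D :: "elt \<Rightarrow> elt"
  assumes "k \<noteq> 0"
    and "even_superderivation lam D"
    and "has_degree D (of_int k)"
  shows "\<exists>a b :: complex. \<forall>x\<in>Alg.
           D x = bracket lam (\<lambda>c. a * sgl (L k) c + b * sgl (I k) c) x"
proof -
  interpret degree_k_even_superderivation lam k D
    using assms by unfold_locales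
  show ?thesis
    using D_eq_bracket_X unfolding X_def by blast
qed

end
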